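(* Let $L=2\pi$ and $k\in\mathbb{Z}\setminus\{0\}$. For $j=1,2$ let $\mathbf{u}^{in}_j\in V^3$ have zero spatial mean and satisfy $\mathbf{u}^{in}_j(\mathbf{x}+\tfrac{L}{k}\mathbf{e}_i)=\mathbf{u}^{in}_j(\mathbf{x})$ for all $\mathbf{x}\in\mathbb{R}^2$ and $i=1,2$, and assume $\|\mathbf{u}^{in}_1\|_H\neq\|\mathbf{u}^{in}_2\|_H$. Let $\mathbf{u}_j$ be the solution of the 2D incompressible Euler equations $$\mathbf{u}_t+\mathbf{u}\cdot\nabla\mathbf{u}=-\nabla p,\qquad\nabla\cdot\mathbf{u}=0$$ on $\mathbb{T}^2$ with initial data $\mathbf{u}^{in}_j$. Then for every $M<|k|$ and all $t\ge0$, $$P_M(\mathbf{u}_1(\cdot,t)-\mathbf{u}_2(\cdot,t))=0,$$ and $$\limsup_{t\to\infty}\|\mathbf{u}_1(\cdot,t)-\mathbf{u}_2(\cdot,t)\|_H>0.$$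
   Context: $\mathbb{T}^2=[0,2\pi)^2$ with periodic boundary conditions; $\mathbf{e}_1,\mathbf{e}_2$ are the standard basis vectors. Let $\mathcal{V}$ be the set of $\mathbb{R}^2$-valued $2\pi$-periodic trigonometric polynomials $\varphi$ with $\nabla\cdot\varphi=0$ and $\int_{\mathbb{T}^2}\varphi=0$; $H$ is the closure of $\mathcal{V}$ in $L^2$ (norm $\|\cdot\|_H=\|\cdot\|_{L^2}$), $V^s$ its closure in the $H^s$ seminorm. $P_M$ is the projection onto the Fourier modes $\mathbf{n}\in\mathbb{Z}^2\setminus\{(0,0)\}$ with $|\mathbf{n}|\le M$. For data in $V^s$, $s\ge3$, the Euler equations are globally well-posed with unique solutions in $C([0,T];V^s)$ and conserve the $H$ norm. *)

theory Defs
  imports "HOL-Analysis.Analysis"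
begin

text \<open>Points of the torus are represented by 2\<pi>-periodic functions on real^2.
  The fundamental domain is the box [0,2\<pi>]^2.\<close>

definition torus_box :: "(real^2) set" where
  "torus_box = cbox 0 (\<chi> i. 2 * pi)"

definition periodic_field :: "(real^2 \<Rightarrow> 'b) \<Rightarrow> bool" where
  "periodic_field f \<longleftrightarrow> (\<forall>x (i::2). f (x + (2 * pi) *\<^sub>R axis i 1) = f x)"

definition fourier_coeff :: "(real^2 \<Rightarrow> real^2) \<Rightarrow> 2 \<Rightarrow> int \<times> int \<Rightarrow> complex" where
  "fourier_coeff f j n =
     integral torus_box (\<lambda>x. complex_of_real (f x $ j) *
        exp (- \<i> * complex_of_real (real_of_int (fst n) * x $ 1 + real_of_int (snd n) * x $ 2)))
     / complex_of_real (4 * pi\<^sup>2)"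

definition H_norm :: "(real^2 \<Rightarrow> real^2) \<Rightarrow> real" where
  "H_norm f = sqrt (integral torus_box (\<lambda>x. (norm (f x))\<^sup>2))"

text \<open>V^3: periodic L^2 fields with zero mean, divergence free (in the Fourier sense)
  and with finite H^3 seminorm; this is the closure of the divergence-free mean-zero
  trigonometric polynomials in the H^3 seminorm.\<close>
definition V3 :: "(real^2 \<Rightarrow> real^2) set" where
  "V3 = {f. periodic_field f \<and>
           f absolutely_integrable_on torus_box \<and>
           (\<lambda>x. (norm (f x))\<^sup>2) integrable_on torus_box \<and>
           integral torus_box f = 0 \<and>
           (\<forall>n. of_int (fst n) * fourier_coeff f 1 n + of_int (snd n) * fourier_coeff f 2 n = 0) \<and>
           (\<lambda>n. (real_of_int (fst n)^2 + real_of_int (snd n)^2)^3 *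
                 ((cmod (fourier_coeff f 1 n))\<^sup>2 + (cmod (fourier_coeff f 2 n))\<^sup>2))
             summable_on (UNIV :: (int \<times> int) set)}"

definition modes :: "real \<Rightarrow> (int \<times> int) set" where
  "modes M = {n. n \<noteq> (0,0) \<and> real_of_int (fst n)^2 + real_of_int (snd n)^2 \<le> M\<^sup>2 \<and> 0 \<le> M}"

definition P_proj :: "real \<Rightarrow> (real^2 \<Rightarrow> real^2) \<Rightarrow> (real^2 \<Rightarrow> real^2)" where
  "P_proj M f = (\<lambda>x. \<chi> j. Re (\<Sum>n\<in>modes M. fourier_coeff f j n *
        exp (\<i> * complex_of_real (real_of_int (fst n) * x $ 1 + real_of_int (snd n) * x $ 2))))"

definition euler_solution :: "(real \<Rightarrow> real^2 \<Rightarrow> real^2) \<Rightarrow> (real^2 \<Rightarrow> real^2) \<Rightarrow> bool" where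
  "euler_solution u u0 \<longleftrightarrow>
     (\<forall>x. u 0 x = u0 x) \<and> (\<forall>t\<ge>0. u t \<in> V3) \<and>
     (\<exists>(ut :: real \<Rightarrow> real^2 \<Rightarrow> real^2) (Du :: real \<Rightarrow> real^2 \<Rightarrow> ((real^2) \<Rightarrow>\<^sub>L (real^2)))
        (p :: real \<Rightarrow> real^2 \<Rightarrow> real) (gp :: real \<Rightarrow> real^2 \<Rightarrow> real^2).
        continuous_on ({0..} \<times> UNIV) (\<lambda>(t,x). u t x) \<and>
        continuous_on ({0..} \<times> UNIV) (\<lambda>(t,x). ut t x) \<and>
        continuous_on ({0..} \<times> UNIV) (\<lambda>(t,x). Du t x) \<and>
        (\<forall>t\<ge>0. periodic_field (p t) \<and>
           (\<forall>x. ((\<lambda>s. u s x) has_vector_derivative ut t x) (at t within {0..}) \<and>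
                (u t has_derivative blinfun_apply (Du t x)) (at x) \<and>
                (p t has_derivative (\<lambda>h. gp t x \<bullet> h)) (at x) \<and>
                (blinfun_apply (Du t x) (axis 1 1)) $ 1 + (blinfun_apply (Du t x) (axis 2 1)) $ 2 = 0 \<and>
                ut t x + blinfun_apply (Du t x) (u t x) = - gp t x)))"

end

theory Submission
  imports Defs
begin

(*
  The Euler equations commute with translations, so the whole argument rests on uniqueness of
  classical solutions. For two solutions u and v with w = u - v, the time derivative of the energy
  integral of w equals -2 times the integral of w . (Dv) w: every other term of w . (w_t) is the
  divergence of the periodic flux |w|^2/2 u + (p - q) w and integrates to zero over the torus.
  Gronwall's inequality then forces w = 0 when the initial data agree.

  Applied to u and its translate by (2 pi / k) e_i, uniqueness shows that the solutions stay
  (2 pi / k)-periodic in each direction; translation multiplies the Fourier coefficient of mode n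
  by exp(-2 pi i n_i / k), so all modes with 0 < |n| < |k| vanish and P_M (u1 - u2) = 0 for
  M < |k|. The energy identity with v = 0 gives conservation of the H norm, so the reverse
  triangle inequality bounds the H norm of u1(t) - u2(t) from below by the positive constant
  |H_norm uin1 - H_norm uin2| for all t.
*)

section \<open>Periodic fields and integrals over the torus\<close>

lemma periodic_shift_int:
  assumes "\<And>x. f (x + (2 * pi) *\<^sub>R axis i 1) = f x"
  shows "f (x + (2 * pi * of_int m) *\<^sub>R axis i 1) = f x"
proof (induction m arbitrary: x rule: int_induct[where k = 0])
  case base
  then show ?case by simp
next
  case (step1 m)
  have "f (x + (2 * pi * of_int (m + 1)) *\<^sub>R axis i 1)
      = f ((x + (2 * pi * of_int m) *\<^sub>R axis i 1) + (2 * pi) *\<^sub>R axis i 1)"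
    by (simp add: algebra_simps)
  also have "\<dots> = f x"
    using assms step1 by simp
  finally show ?case .
next
  case (step2 m)
  have "f (x + (2 * pi * of_int (m - 1)) *\<^sub>R axis i 1)
      = f ((x + (2 * pi * of_int (m - 1)) *\<^sub>R axis i 1) + (2 * pi) *\<^sub>R axis i 1)"
    using assms by simp
  also have "\<dots> = f x"
    using step2 by (simp add: algebra_simps)
  finally show ?case .
qed

lemma periodic_field_translate:
  assumes "periodic_field f"
  shows "periodic_field (\<lambda>x. f (x + a))"
  using assms unfolding periodic_field_def by (metis add.assoc add.commute)

lemma periodic_field_eq_0_from_torus_box:
  assumes "periodic_field f" and "\<And>y. y \<in> torus_box \<Longrightarrow> f y = 0"
  shows "f x = 0"
proof -
  define m where "m i = \<lfloor>x $ i / (2 * pi)\<rfloor>" for i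
  define y where "y = x + (2 * pi * of_int (- m 1)) *\<^sub>R axis 1 1 + (2 * pi * of_int (- m 2)) *\<^sub>R axis 2 1"
  have per: "\<And>x. f (x + (2 * pi) *\<^sub>R axis j 1) = f x" for j
    using assms(1) unfolding periodic_field_def by blast
  have "f y = f (x + (2 * pi * of_int (- m 1)) *\<^sub>R axis 1 1)"
    unfolding y_def by (rule periodic_shift_int) (rule per)
  also have "\<dots> = f x"
    by (rule periodic_shift_int) (rule per)
  finally have "f y = f x" .
  have "y $ i = 2 * pi * frac (x $ i / (2 * pi))" for i
    using exhaust_2[of i] by (auto simp: y_def m_def frac_def axis_def field_simps)
  then have "y \<in> torus_box"
    by (simp add: torus_box_def mem_box_cart less_imp_le[OF frac_lt_1])
  with \<open>f y = f x\<close> assms(2) show ?thesis by simp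
qed

lemma integrable_on_torus_box:
  fixes f :: "real^2 \<Rightarrow> 'b::banach"
  assumes "continuous_on UNIV f"
  shows "f integrable_on torus_box"
  unfolding torus_box_def using assms by (blast intro: integrable_continuous continuous_on_subset)

lemma integral_torus_box_translate_axis_le_period:
  fixes f :: "real^2 \<Rightarrow> 'b::banach"
  assumes cont: "continuous_on UNIV f" and per: "\<And>x. f (x + (2 * pi) *\<^sub>R axis i 1) = f x"
    and c: "0 \<le> c" "c \<le> 2 * pi"
  shows "integral torus_box (\<lambda>x. f (x + c *\<^sub>R axis i 1)) = integral torus_box f"
proof -
  define e :: "real^2" where "e = axis i 1"
  define b :: "real^2" where "b = (\<chi> j. 2 * pi)"
  define b' :: "real^2" where "b' = (\<chi> j. if j = i then c else 2 * pi)"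
  have e: "e \<in> Basis"
    unfolding e_def by (auto simp: Basis_vec_def)
  have intg: "f integrable_on cbox u v" for u v
    using cont by (blast intro: integrable_continuous continuous_on_subset)
  have shift: "integral (cbox u v) (\<lambda>x. f (x + d)) = integral (cbox (u + d) (v + d)) f" for u v d
  proof -
    have "(f has_integral integral (cbox (u + d) (v + d)) f) (cbox (u + d) (v + d))"
      using intg by blast
    then have "((f \<circ> (+) d) has_integral integral (cbox (u + d) (v + d)) f) (cbox u v)"
      by (simp add: has_integral_shift_cbox_iff)
    then show ?thesis
      by (simp add: o_def add.commute integral_unique)
  qed
  \<comment> \<open>The shifted box is cut at the hyperplane \<open>x \<bullet> e = 2 * pi\<close>; the part beyond it is moved
    back by one period and becomes the slab \<open>x \<bullet> e \<le> c\<close> of the original box.\<close>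
  have boxes:
    "cbox (c *\<^sub>R e) (b + c *\<^sub>R e) \<inter> {x. x \<bullet> e \<le> 2 * pi} = cbox (c *\<^sub>R e) b"
    "cbox (c *\<^sub>R e) (b + c *\<^sub>R e) \<inter> {x. 2 * pi \<le> x \<bullet> e} = cbox ((2 * pi) *\<^sub>R e) (b' + (2 * pi) *\<^sub>R e)"
    "cbox 0 b \<inter> {x. x \<bullet> e \<le> c} = cbox 0 b'"
    "cbox 0 b \<inter> {x. c \<le> x \<bullet> e} = cbox (c *\<^sub>R e) b"
    using c exhaust_2[of i]
    by (auto simp: mem_box_cart forall_2 e_def b_def b'_def inner_axis) (auto simp: axis_def)
  have "integral torus_box (\<lambda>x. f (x + c *\<^sub>R e)) = integral (cbox (c *\<^sub>R e) (b + c *\<^sub>R e)) f"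
    using shift[of 0 b "c *\<^sub>R e"] by (simp add: torus_box_def b_def)
  also have "\<dots> = integral (cbox (c *\<^sub>R e) b) f + integral (cbox ((2 * pi) *\<^sub>R e) (b' + (2 * pi) *\<^sub>R e)) f"
    using integral_split[OF intg e, of _ _ "2 * pi"] boxes(1,2) by simp
  also have "integral (cbox ((2 * pi) *\<^sub>R e) (b' + (2 * pi) *\<^sub>R e)) f = integral (cbox 0 b') f"
    using shift[of 0 b' "(2 * pi) *\<^sub>R e"] per by (simp add: e_def)
  also have "integral (cbox (c *\<^sub>R e) b) f + integral (cbox 0 b') f = integral (cbox 0 b) f"
    using integral_split[OF intg e, of 0 b c] boxes(3,4) by simp
  finally show ?thesis
    by (simp add: torus_box_def b_def e_def)
qed

lemma integral_torus_box_translate_axis: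
  fixes f :: "real^2 \<Rightarrow> 'b::banach"
  assumes cont: "continuous_on UNIV f" and per: "\<And>x. f (x + (2 * pi) *\<^sub>R axis i 1) = f x"
  shows "integral torus_box (\<lambda>x. f (x + c *\<^sub>R axis i 1)) = integral torus_box f"
proof -
  define c0 where "c0 = 2 * pi * frac (c / (2 * pi))"
  have c0: "0 \<le> c0" "c0 \<le> 2 * pi"
    unfolding c0_def by (simp_all add: less_imp_le[OF frac_lt_1])
  have "c = c0 + 2 * pi * of_int \<lfloor>c / (2 * pi)\<rfloor>"
    by (simp add: c0_def frac_def field_simps)
  then have shift: "x + c *\<^sub>R axis i 1
      = (x + c0 *\<^sub>R axis i 1) + (2 * pi * of_int \<lfloor>c / (2 * pi)\<rfloor>) *\<^sub>R axis i 1" for x :: "real^2"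
    by (metis add.assoc scaleR_add_left)
  have "f (x + c *\<^sub>R axis i 1) = f (x + c0 *\<^sub>R axis i 1)" for x
    unfolding shift by (rule periodic_shift_int[where f = f and x = "x + c0 *\<^sub>R axis i 1", OF per])
  then have "integral torus_box (\<lambda>x. f (x + c *\<^sub>R axis i 1))
      = integral torus_box (\<lambda>x. f (x + c0 *\<^sub>R axis i 1))"
    by simp
  also have "\<dots> = integral torus_box f"
    using c0 by (intro integral_torus_box_translate_axis_le_period cont per)
  finally show ?thesis .
qed

lemma integral_torus_box_translate:
  fixes f :: "real^2 \<Rightarrow> 'b::banach"
  assumes cont: "continuous_on UNIV f" and per: "periodic_field f"
  shows "integral torus_box (\<lambda>x. f (x + c)) = integral torus_box f"
proof -
  define g where "g x = f (x + (c $ 2) *\<^sub>R axis 2 1)" for x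
  have "c = (c $ 1) *\<^sub>R axis 1 1 + (c $ 2) *\<^sub>R axis 2 1"
    by (simp add: vec_eq_iff forall_2 axis_def)
  then have "f (x + c) = g (x + (c $ 1) *\<^sub>R axis 1 1)" for x
    unfolding g_def by (metis add.assoc)
  then have "integral torus_box (\<lambda>x. f (x + c)) = integral torus_box (\<lambda>x. g (x + (c $ 1) *\<^sub>R axis 1 1))"
    by simp
  also have "\<dots> = integral torus_box g"
  proof (rule integral_torus_box_translate_axis)
    show "continuous_on UNIV g"
      unfolding g_def by (rule continuous_on_compose2[OF cont]) (auto intro!: continuous_intros)
    have "x + (2 * pi) *\<^sub>R axis 1 1 + (c $ 2) *\<^sub>R axis 2 1
        = (x + (c $ 2) *\<^sub>R axis 2 1) + (2 * pi) *\<^sub>R axis 1 1" for x :: "real^2"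
      by (simp add: algebra_simps)
    then show "g (x + (2 * pi) *\<^sub>R axis 1 1) = g x" for x
      using per unfolding g_def periodic_field_def by metis
  qed
  also have "\<dots> = integral torus_box f"
    using per unfolding g_def periodic_field_def by (intro integral_torus_box_translate_axis cont) auto
  finally show ?thesis .
qed

lemma integral_torus_box_derivative_eq_0:
  fixes g :: "real^2 \<Rightarrow> real"
  assumes per: "periodic_field g" and der: "\<And>x. (g has_derivative g' x) (at x)"
    and cont': "continuous_on UNIV (\<lambda>x. g' x h)"
  shows "integral torus_box (\<lambda>x. g' x h) = 0"
proof -
  have cont: "continuous_on UNIV g"
    using der by (meson continuous_at_imp_continuous_on has_derivative_continuous)
  \<comment> \<open>All translates of \<open>g\<close> have the same integral, so differentiating the translated
    integrals under the integral sign at \<open>s = 0\<close> gives \<open>0\<close>.\<close>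
  have "((\<lambda>s. integral torus_box (\<lambda>x. g (x + s *\<^sub>R h))) has_real_derivative
          integral torus_box (\<lambda>x. g' (x + 0 *\<^sub>R h) h)) (at 0)"
    unfolding torus_box_def
  proof (rule leibniz_rule_field_derivative[where U = UNIV, simplified])
    fix s x
    have "((\<lambda>s. g (x + s *\<^sub>R h)) has_derivative (\<lambda>ds. g' (x + s *\<^sub>R h) (ds *\<^sub>R h))) (at s)"
      by (rule has_derivative_compose[OF _ der]) (auto intro!: derivative_eq_intros)
    moreover have "(\<lambda>ds. g' (x + s *\<^sub>R h) (ds *\<^sub>R h)) = (*) (g' (x + s *\<^sub>R h) h)"
      using linear_cmul[OF has_derivative_linear[OF der]] by (auto simp: fun_eq_iff)
    ultimately show "((\<lambda>s. g (x + s *\<^sub>R h)) has_real_derivative g' (x + s *\<^sub>R h) h) (at s)"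
      by (simp add: has_field_derivative_def)
  next
    show "(\<lambda>x. g (x + s *\<^sub>R h)) integrable_on cbox 0 (\<chi> i. 2 * pi)" for s
      by (rule integrable_continuous, rule continuous_on_compose2[OF cont]) (auto intro!: continuous_intros)
    show "continuous_on (UNIV \<times> cbox 0 (\<chi> i. 2 * pi)) (\<lambda>(s, x). g' (x + s *\<^sub>R h) h)"
      unfolding split_beta'
      by (rule continuous_on_compose2[OF cont', of _ "\<lambda>z. snd z + fst z *\<^sub>R h"])
         (auto intro!: continuous_intros)
  qed
  moreover have "integral torus_box (\<lambda>x. g (x + s *\<^sub>R h)) = integral torus_box g" for s
    by (rule integral_torus_box_translate[OF cont per])
  ultimately have "((\<lambda>_. integral torus_box g) has_real_derivative integral torus_box (\<lambda>x. g' x h)) (at 0)"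
    by simp
  then show ?thesis
    using DERIV_const DERIV_unique by blast
qed

section \<open>Divergence theorem on the torus\<close>

lemma trace_matrix: "trace (matrix (A :: real^'n \<Rightarrow> real^'n)) = (\<Sum>i\<in>UNIV. A (axis i 1) $ i)"
  by (simp add: trace_def matrix_def)

lemma trace_matrix_add:
  "trace (matrix (\<lambda>h. A h + B h)) = trace (matrix A) + trace (matrix (B :: real^'n \<Rightarrow> real^'n))"
  by (simp add: trace_matrix sum.distrib)

lemma trace_matrix_diff:
  "trace (matrix (\<lambda>h. A h - B h)) = trace (matrix A) - trace (matrix (B :: real^'n \<Rightarrow> real^'n))"
  by (simp add: trace_matrix sum_subtractf)

lemma trace_matrix_scaleR:
  "trace (matrix (\<lambda>h. c *\<^sub>R A h)) = c * trace (matrix (A :: real^'n \<Rightarrow> real^'n))"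
  by (simp add: trace_matrix sum_distrib_left)

lemma trace_matrix_rank_one:
  fixes L :: "real^'n \<Rightarrow> real^'n"
  assumes "linear L"
  shows "trace (matrix (\<lambda>h. (a \<bullet> L h) *\<^sub>R b)) = a \<bullet> L b"
proof -
  have "trace (matrix (\<lambda>h. (a \<bullet> L h) *\<^sub>R b)) = a \<bullet> (\<Sum>i\<in>UNIV. b $ i *\<^sub>R L (axis i 1))"
    by (simp add: trace_matrix inner_sum_right mult.commute)
  also have "(\<Sum>i\<in>UNIV. b $ i *\<^sub>R L (axis i 1)) = L (\<Sum>i\<in>UNIV. b $ i *\<^sub>R axis i 1)"
    by (simp add: linear_sum[OF assms] linear_scale[OF assms])
  also have "(\<Sum>i\<in>UNIV. b $ i *\<^sub>R axis i 1) = b"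
    using basis_expansion[of b] by (simp add: scalar_mult_eq_scaleR)
  finally show ?thesis .
qed

lemma integral_torus_box_divergence_eq_0:
  fixes F :: "real^2 \<Rightarrow> real^2"
  assumes per: "periodic_field F" and der: "\<And>x. (F has_derivative DF x) (at x)"
    and cont: "\<And>h. continuous_on UNIV (\<lambda>x. DF x h)"
  shows "integral torus_box (\<lambda>x. trace (matrix (DF x))) = 0"
proof -
  have cont_i: "continuous_on UNIV (\<lambda>x. DF x (axis i 1) $ i)" for i
    by (intro continuous_intros cont)
  have "integral torus_box (\<lambda>x. DF x (axis i 1) $ i) = 0" for i
  proof (rule integral_torus_box_derivative_eq_0[where g' = "\<lambda>x h. DF x h $ i"])
    show "periodic_field (\<lambda>x. F x $ i)"
      using per by (simp add: periodic_field_def)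
    show "((\<lambda>x. F x $ i) has_derivative (\<lambda>h. DF x h $ i)) (at x)" for x
      by (rule bounded_linear.has_derivative[OF bounded_linear_vec_nth der])
  qed (rule cont_i)
  then show ?thesis
    by (simp add: trace_matrix integral_sum integrable_on_torus_box[OF cont_i])
qed

section \<open>Fourier coefficients of translation-invariant fields\<close>

lemma fourier_coeff_eq_0_if_translation_invariant:
  fixes f :: "real^2 \<Rightarrow> real^2"
  assumes cont: "continuous_on UNIV f" and per: "periodic_field f"
    and inv: "\<And>x. f (x + a) = f x"
    and phase: "exp (- \<i> * complex_of_real (of_int (fst n) * a $ 1 + of_int (snd n) * a $ 2)) \<noteq> 1"
  shows "fourier_coeff f j n = 0"
proof -
  define ph where "ph x = of_int (fst n) * x $ 1 + of_int (snd n) * x $ 2" for x :: "real^2"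
  define G where "G x = complex_of_real (f x $ j) * exp (- \<i> * complex_of_real (ph x))" for x
  have G_shift: "G (x + b) = complex_of_real (f (x + b) $ j) * exp (- \<i> * complex_of_real (ph x))
      * exp (- \<i> * complex_of_real (ph b))" for x b
    by (simp add: G_def ph_def algebra_simps flip: exp_add)
  have "continuous_on UNIV G"
    unfolding G_def ph_def by (intro continuous_intros cont)
  moreover have "periodic_field G"
    unfolding periodic_field_def
  proof (intro allI)
    fix x and l :: 2
    obtain m :: int where "ph ((2 * pi) *\<^sub>R axis l 1) = 2 * pi * of_int m"
      using exhaust_2[of l] by (auto simp: ph_def axis_def)
    then have "exp (- \<i> * complex_of_real (ph ((2 * pi) *\<^sub>R axis l 1))) = 1"
      by (simp add: exp_eq_1) (metis mult_minus_right of_int_minus)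
    then show "G (x + (2 * pi) *\<^sub>R axis l 1) = G x"
      using per unfolding G_shift periodic_field_def by (simp add: G_def)
  qed
  ultimately have "integral torus_box G = integral torus_box (\<lambda>x. G (x + a))"
    by (simp add: integral_torus_box_translate)
  also have "\<dots> = integral torus_box (\<lambda>x. G x * exp (- \<i> * complex_of_real (ph a)))"
    unfolding G_shift inv by (simp add: G_def)
  also have "\<dots> = integral torus_box G * exp (- \<i> * complex_of_real (ph a))"
    by simp
  finally have "integral torus_box G = 0"
    using phase unfolding ph_def by (metis mult.right_neutral mult_cancel_left)
  then show ?thesis
    unfolding fourier_coeff_def G_def ph_def by simp
qed

lemma exp_rational_phase_neq_1:
  fixes k m :: int
  assumes "m \<noteq> 0" and "\<bar>m\<bar> < \<bar>k\<bar>"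
  shows "exp (- \<i> * complex_of_real (2 * pi / of_int k * of_int m)) \<noteq> 1"
proof
  assume "exp (- \<i> * complex_of_real (2 * pi / of_int k * of_int m)) = 1"
  then obtain l :: int where l: "- (2 * pi / of_int k * of_int m) = of_int (2 * l) * pi"
    unfolding exp_eq_1 by auto
  have "k \<noteq> 0"
    using assms by linarith
  with l have "pi * of_int (- m) = pi * of_int (l * k)"
    by (simp add: field_simps)
  then have "real_of_int (- m) = of_int (l * k)"
    using mult_left_cancel[OF pi_neq_zero] by blast
  then have "- m = l * k"
    by (simp only: of_int_eq_iff)
  then have "k dvd m"
    by (metis dvd_minus_iff dvd_triv_right)
  from dvd_imp_le_int[OF assms(1) this] assms(2) show False
    by linarith
qed

lemma modes_component_bound:
  assumes "n \<in> modes M" and "M < of_int \<bar>k\<bar>"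
  shows "\<bar>fst n\<bar> < \<bar>k\<bar>" and "\<bar>snd n\<bar> < \<bar>k\<bar>"
proof -
  have M: "0 \<le> M" and n: "of_int (fst n)^2 + of_int (snd n)^2 \<le> M^2"
    using assms(1) by (auto simp: modes_def)
  have "M^2 < of_int k ^ 2"
    using M assms(2) power_strict_mono[of M "of_int \<bar>k\<bar>" 2] by simp
  then have "of_int (fst n ^ 2) < (of_int (k ^ 2) :: real)" "of_int (snd n ^ 2) < (of_int (k ^ 2) :: real)"
    unfolding of_int_power
    using n zero_le_power2[of "of_int (fst n) :: real"] zero_le_power2[of "of_int (snd n) :: real"]
    by linarith+
  then show "\<bar>fst n\<bar> < \<bar>k\<bar>" "\<bar>snd n\<bar> < \<bar>k\<bar>"
    unfolding of_int_less_iff by (metis abs_le_square_iff not_le)+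
qed

lemma fourier_coeff_low_modes_eq_0:
  fixes f :: "real^2 \<Rightarrow> real^2" and k :: int
  assumes cont: "continuous_on UNIV f" and per: "periodic_field f"
    and inv: "\<And>x i. f (x + (2 * pi / of_int k) *\<^sub>R axis i 1) = f x"
    and n: "n \<in> modes M" and M: "M < of_int \<bar>k\<bar>"
  shows "fourier_coeff f j n = 0"
proof -
  note bound = modes_component_bound[OF n M]
  consider "fst n \<noteq> 0" | "snd n \<noteq> 0"
    using n by (auto simp: modes_def prod_eq_iff)
  then show ?thesis
  proof cases
    case 1
    then have "exp (- \<i> * complex_of_real (2 * pi / of_int k * of_int (fst n))) \<noteq> 1"
      using bound by (intro exp_rational_phase_neq_1)
    then show ?thesis
      by (intro fourier_coeff_eq_0_if_translation_invariant[OF cont per, of "(2 * pi / of_int k) *\<^sub>R axis 1 1"] inv)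
         (simp add: axis_def mult.commute)
  next
    case 2
    then have "exp (- \<i> * complex_of_real (2 * pi / of_int k * of_int (snd n))) \<noteq> 1"
      using bound by (intro exp_rational_phase_neq_1)
    then show ?thesis
      by (intro fourier_coeff_eq_0_if_translation_invariant[OF cont per, of "(2 * pi / of_int k) *\<^sub>R axis 2 1"] inv)
         (simp add: axis_def mult.commute)
  qed
qed

lemma P_proj_eq_0:
  assumes "\<And>j n. n \<in> modes M \<Longrightarrow> fourier_coeff f j n = 0"
  shows "P_proj M f = (\<lambda>x. 0)"
  using assms by (simp add: P_proj_def vec_eq_iff fun_eq_iff)

section \<open>The H norm\<close>

lemma quadratic_nonneg_imp_discriminant_le:
  fixes A B C :: real
  assumes nonneg: "\<And>l. 0 \<le> A - 2 * l * C + l^2 * B" and "0 \<le> B"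
  shows "C^2 \<le> A * B"
proof (cases "B = 0")
  case True
  have "0 \<le> A - 2 * ((A + 1) / (2 * C)) * C"
    using nonneg[of "(A + 1) / (2 * C)"] True by simp
  then have "C = 0"
    by (cases "C = 0") (simp_all add: field_simps)
  then show ?thesis
    using True by simp
next
  case False
  then have "0 < B"
    using \<open>0 \<le> B\<close> by simp
  have "0 \<le> A - 2 * (C / B) * C + (C / B)^2 * B"
    by (rule nonneg)
  also have "\<dots> = A - C^2 / B"
    using \<open>0 < B\<close> by (simp add: field_simps power2_eq_square)
  finally show ?thesis
    using \<open>0 < B\<close> by (simp add: pos_divide_le_eq mult.commute)
qed

lemma integral_torus_box_norm_diff_squared:
  fixes f g :: "real^2 \<Rightarrow> real^2"
  assumes f: "continuous_on UNIV f" and g: "continuous_on UNIV g"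
  shows "integral torus_box (\<lambda>x. (norm (f x - l *\<^sub>R g x))\<^sup>2)
    = integral torus_box (\<lambda>x. (norm (f x))\<^sup>2) - 2 * l * integral torus_box (\<lambda>x. f x \<bullet> g x)
      + l^2 * integral torus_box (\<lambda>x. (norm (g x))\<^sup>2)"
proof -
  have "(norm (f x - l *\<^sub>R g x))\<^sup>2 = (norm (f x))\<^sup>2 - 2 * l * (f x \<bullet> g x) + l^2 * (norm (g x))\<^sup>2" for x
    unfolding power2_norm_eq_inner
    by (simp add: inner_diff_left inner_diff_right inner_commute[of "g x" "f x"] algebra_simps power2_eq_square)
  moreover have "((\<lambda>x. (norm (f x))\<^sup>2 - 2 * l * (f x \<bullet> g x) + l^2 * (norm (g x))\<^sup>2) has_integral
      integral torus_box (\<lambda>x. (norm (f x))\<^sup>2) - 2 * l * integral torus_box (\<lambda>x. f x \<bullet> g x)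
      + l^2 * integral torus_box (\<lambda>x. (norm (g x))\<^sup>2)) torus_box"
    by (intro has_integral_add has_integral_diff has_integral_mult_right integrable_integral
        integrable_on_torus_box continuous_intros f g)
  ultimately show ?thesis
    by (simp add: integral_unique)
qed

lemma H_norm_squared:
  assumes "continuous_on UNIV f"
  shows "(H_norm f)^2 = integral torus_box (\<lambda>x. (norm (f x))\<^sup>2)"
  unfolding H_norm_def
  by (intro real_sqrt_pow2 integral_nonneg integrable_on_torus_box continuous_intros assms) simp

lemma H_norm_nonneg:
  assumes "continuous_on UNIV f"
  shows "0 \<le> H_norm f"
  unfolding H_norm_def
  by (intro real_sqrt_ge_zero integral_nonneg integrable_on_torus_box continuous_intros assms) simp

lemma integral_torus_box_inner_le:
  fixes f g :: "real^2 \<Rightarrow> real^2"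
  assumes f: "continuous_on UNIV f" and g: "continuous_on UNIV g"
  shows "integral torus_box (\<lambda>x. f x \<bullet> g x) \<le> H_norm f * H_norm g"
proof -
  have "0 \<le> (H_norm f)^2 - 2 * l * integral torus_box (\<lambda>x. f x \<bullet> g x) + l^2 * (H_norm g)^2" for l
  proof -
    have "0 \<le> integral torus_box (\<lambda>x. (norm (f x - l *\<^sub>R g x))\<^sup>2)"
      by (intro integral_nonneg integrable_on_torus_box continuous_intros f g) simp
    then show ?thesis
      by (simp only: integral_torus_box_norm_diff_squared[OF f g] H_norm_squared[OF f] H_norm_squared[OF g])
  qed
  then have "(integral torus_box (\<lambda>x. f x \<bullet> g x))^2 \<le> (H_norm f)^2 * (H_norm g)^2"
    by (rule quadratic_nonneg_imp_discriminant_le) simp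
  then have "(integral torus_box (\<lambda>x. f x \<bullet> g x))^2 \<le> (H_norm f * H_norm g)^2"
    by (simp only: power_mult_distrib)
  then show ?thesis
    by (rule power2_le_imp_le) (simp add: H_norm_nonneg f g)
qed

lemma H_norm_diff_ge:
  fixes f g :: "real^2 \<Rightarrow> real^2"
  assumes f: "continuous_on UNIV f" and g: "continuous_on UNIV g"
  shows "\<bar>H_norm f - H_norm g\<bar> \<le> H_norm (\<lambda>x. f x - g x)"
proof -
  have "(H_norm f - H_norm g)^2 = (H_norm f)^2 - 2 * H_norm f * H_norm g + (H_norm g)^2"
    by (simp add: power2_diff)
  also have "\<dots> \<le> (H_norm f)^2 - 2 * integral torus_box (\<lambda>x. f x \<bullet> g x) + (H_norm g)^2"
    using integral_torus_box_inner_le[OF f g] by simp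
  also have "\<dots> = (H_norm (\<lambda>x. f x - g x))^2"
    using integral_torus_box_norm_diff_squared[OF f g, of 1]
    by (simp add: H_norm_squared f g continuous_on_diff)
  finally have "\<bar>H_norm f - H_norm g\<bar>^2 \<le> (H_norm (\<lambda>x. f x - g x))^2"
    by simp
  then show ?thesis
    by (rule power2_le_imp_le) (simp add: H_norm_nonneg f g continuous_on_diff)
qed

lemma H_norm_eq_0_imp_eq_0:
  fixes f :: "real^2 \<Rightarrow> real^2"
  assumes cont: "continuous_on UNIV f" and per: "periodic_field f" and "H_norm f = 0"
  shows "f x = 0"
proof (rule periodic_field_eq_0_from_torus_box[OF per])
  fix y assume y: "y \<in> torus_box"
  have "(\<lambda>x. (norm (f x))\<^sup>2) integrable_on torus_box"
    by (intro integrable_on_torus_box continuous_intros cont)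
  then have "((\<lambda>x. (norm (f x))\<^sup>2) has_integral 0) torus_box"
    using H_norm_squared[OF cont] \<open>H_norm f = 0\<close> integrable_integral by fastforce
  then have "(norm (f y))\<^sup>2 = 0"
    using y unfolding torus_box_def
    by (intro has_integral_0_cbox_imp_0[where f = "\<lambda>x. (norm (f x))\<^sup>2"])
       (auto intro!: continuous_intros continuous_on_subset[OF cont]
         simp: box_ne_empty Basis_vec_def inner_axis)
  then show "f y = 0"
    by simp
qed

section \<open>Classical Euler flows\<close>

lemma continuous_on_slice:
  assumes "continuous_on ({0..} \<times> UNIV) (\<lambda>(t, x). F t x)" and "t \<ge> 0"
  shows "continuous_on UNIV (F t)"
proof -
  have "continuous_on UNIV ((\<lambda>(t, x). F t x) \<circ> Pair t)"
    using assms by (intro continuous_on_compose continuous_intros continuous_on_subset[OF assms(1)]) auto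
  then show ?thesis
    by (simp add: o_def)
qed

locale euler_flow =
  fixes u ut :: "real \<Rightarrow> real^2 \<Rightarrow> real^2"
    and Du :: "real \<Rightarrow> real^2 \<Rightarrow> (real^2) \<Rightarrow>\<^sub>L (real^2)"
    and p :: "real \<Rightarrow> real^2 \<Rightarrow> real" and gp :: "real \<Rightarrow> real^2 \<Rightarrow> real^2"
  assumes continuous_u: "continuous_on ({0..} \<times> UNIV) (\<lambda>(t, x). u t x)"
    and continuous_ut: "continuous_on ({0..} \<times> UNIV) (\<lambda>(t, x). ut t x)"
    and continuous_Du: "continuous_on ({0..} \<times> UNIV) (\<lambda>(t, x). Du t x)"
    and periodic_u: "t \<ge> 0 \<Longrightarrow> periodic_field (u t)"
    and periodic_p: "t \<ge> 0 \<Longrightarrow> periodic_field (p t)"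
    and time_derivative: "t \<ge> 0 \<Longrightarrow> ((\<lambda>s. u s x) has_vector_derivative ut t x) (at t within {0..})"
    and space_derivative: "t \<ge> 0 \<Longrightarrow> (u t has_derivative blinfun_apply (Du t x)) (at x)"
    and pressure_gradient: "t \<ge> 0 \<Longrightarrow> (p t has_derivative (\<lambda>h. gp t x \<bullet> h)) (at x)"
    and divergence_free: "t \<ge> 0 \<Longrightarrow> trace (matrix (blinfun_apply (Du t x))) = 0"
    and momentum_equation: "t \<ge> 0 \<Longrightarrow> ut t x + Du t x (u t x) = - gp t x"
begin

lemma continuous_on_u: "t \<ge> 0 \<Longrightarrow> continuous_on UNIV (u t)"
  using continuous_on_slice[OF continuous_u] .

lemma continuous_on_ut: "t \<ge> 0 \<Longrightarrow> continuous_on UNIV (ut t)"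
  using continuous_on_slice[OF continuous_ut] .

lemma continuous_on_Du: "t \<ge> 0 \<Longrightarrow> continuous_on UNIV (Du t)"
  using continuous_on_slice[OF continuous_Du] .

lemma continuous_on_p: "t \<ge> 0 \<Longrightarrow> continuous_on UNIV (p t)"
  using pressure_gradient by (meson continuous_at_imp_continuous_on has_derivative_continuous)

lemma continuous_on_gp: "t \<ge> 0 \<Longrightarrow> continuous_on UNIV (gp t)"
proof -
  assume "t \<ge> 0"
  then have "gp t = (\<lambda>x. - (ut t x + Du t x (u t x)))"
    using momentum_equation by (simp add: fun_eq_iff)
  then show ?thesis
    using \<open>t \<ge> 0\<close> by (auto intro!: continuous_intros continuous_on_u continuous_on_ut continuous_on_Du)
qed

lemma translate:
  "euler_flow (\<lambda>t x. u t (x + a)) (\<lambda>t x. ut t (x + a)) (\<lambda>t x. Du t (x + a))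
     (\<lambda>t x. p t (x + a)) (\<lambda>t x. gp t (x + a))"
proof -
  have shift: "continuous_on ({0..} \<times> UNIV) (\<lambda>(t, x). F t (x + a))"
    if "continuous_on ({0..} \<times> UNIV) (\<lambda>(t, x). F t x)"
    for F :: "real \<Rightarrow> real^2 \<Rightarrow> 'c::topological_space"
  proof -
    have "continuous_on ({0..} \<times> UNIV) ((\<lambda>(t, x). F t x) \<circ> (\<lambda>(t, x). (t, x + a)))"
      by (intro continuous_on_compose continuous_on_subset[OF that])
         (auto intro!: continuous_intros simp: split_beta)
    then show ?thesis
      by (simp add: o_def split_beta)
  qed
  have translate_derivative: "((\<lambda>x. f (x + a)) has_derivative f') (at x)"
    if "(f has_derivative f') (at (x + a))" for f :: "real^2 \<Rightarrow> 'c::real_normed_vector" and f' x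
  proof -
    have "((\<lambda>x. x + a) has_derivative (\<lambda>h. h)) (at x)"
      by (auto intro!: derivative_eq_intros)
    from has_derivative_compose[OF this that] show ?thesis
      by simp
  qed
  show ?thesis
    by unfold_locales
      (auto intro!: periodic_field_translate periodic_u periodic_p shift continuous_u continuous_ut
        continuous_Du translate_derivative time_derivative space_derivative pressure_gradient divergence_free momentum_equation)
qed

end

lemma euler_flow_zero: "euler_flow (\<lambda>_ _. 0) (\<lambda>_ _. 0) (\<lambda>_ _. 0) (\<lambda>_ _. 0) (\<lambda>_ _. 0)"
  by unfold_locales (auto simp: periodic_field_def trace_matrix zero_blinfun.rep_eq)

lemma euler_solution_imp_euler_flow:
  assumes "euler_solution u u0"
  obtains ut Du p gp where "euler_flow u ut Du p gp"
proof -
  obtain ut Du p gp where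
    "continuous_on ({0..} \<times> UNIV) (\<lambda>(t, x). u t x)"
    "continuous_on ({0..} \<times> UNIV) (\<lambda>(t, x). ut t x)"
    "continuous_on ({0..} \<times> UNIV) (\<lambda>(t, x). Du t x)"
    "\<forall>t\<ge>0. periodic_field (p t) \<and>
       (\<forall>x. ((\<lambda>s. u s x) has_vector_derivative ut t x) (at t within {0..}) \<and>
         (u t has_derivative blinfun_apply (Du t x)) (at x) \<and>
         (p t has_derivative (\<lambda>h. gp t x \<bullet> h)) (at x) \<and>
         blinfun_apply (Du t x) (axis 1 1) $ 1 + blinfun_apply (Du t x) (axis 2 1) $ 2 = 0 \<and>
         ut t x + blinfun_apply (Du t x) (u t x) = - gp t x)"
    using assms unfolding euler_solution_def by blast
  moreover have "t \<ge> 0 \<Longrightarrow> periodic_field (u t)" for t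
    using assms by (simp add: euler_solution_def V3_def)
  ultimately have "euler_flow u ut Du p gp"
    by unfold_locales (simp_all add: trace_matrix sum_2)
  then show ?thesis
    by (rule that)
qed

section \<open>Energy estimate and uniqueness\<close>

lemma inner_euler_difference:
  fixes u v ut vt gu gv :: "real^'n" and A B :: "real^'n \<Rightarrow> real^'n" and p q :: real
  assumes A: "linear A" "trace (matrix A) = 0" "ut + A u = - gu"
    and B: "linear B" "trace (matrix B) = 0" "vt + B v = - gv"
  shows "(u - v) \<bullet> (ut - vt) =
    - trace (matrix (\<lambda>h. ((u - v) \<bullet> (A h - B h)) *\<^sub>R u + ((norm (u - v))\<^sup>2 / 2) *\<^sub>R A h
        + ((gu - gv) \<bullet> h) *\<^sub>R (u - v) + (p - q) *\<^sub>R (A h - B h)))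
    - (u - v) \<bullet> B (u - v)"
proof -
  have AB: "linear (\<lambda>h. A h - B h)"
    using A(1) B(1) by (rule linear_compose_sub)
  have "trace (matrix (\<lambda>h. ((u - v) \<bullet> (A h - B h)) *\<^sub>R u + ((norm (u - v))\<^sup>2 / 2) *\<^sub>R A h
        + ((gu - gv) \<bullet> h) *\<^sub>R (u - v) + (p - q) *\<^sub>R (A h - B h)))
      = (u - v) \<bullet> (A u - B u) + (gu - gv) \<bullet> (u - v)"
    using trace_matrix_rank_one[OF AB, of "u - v" u] trace_matrix_rank_one[OF linear_id, of "gu - gv" "u - v"]
    by (simp add: trace_matrix_add trace_matrix_scaleR trace_matrix_diff A(2) B(2) id_def)
  moreover have "ut - vt = - (gu - gv) - (A u - B u) - B (u - v)"
  proof -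
    have "ut = - gu - A u" "vt = - gv - B v"
      using A(3) B(3) by (simp_all add: eq_diff_eq)
    moreover have "B v = B u - B (u - v)"
      by (simp add: linear_diff[OF B(1)])
    ultimately show ?thesis
      by (simp add: algebra_simps)
  qed
  ultimately show ?thesis
    by (simp add: inner_diff_right inner_commute)
qed

lemma integral_inner_euler_difference:
  assumes su: "euler_flow u ut Du p gp" and sv: "euler_flow v vt Dv q gq" and t: "t \<ge> 0"
  shows "integral torus_box (\<lambda>x. (u t x - v t x) \<bullet> (ut t x - vt t x))
    = - integral torus_box (\<lambda>x. (u t x - v t x) \<bullet> Dv t x (u t x - v t x))"
proof -
  interpret U: euler_flow u ut Du p gp by (rule su)
  interpret V: euler_flow v vt Dv q gq by (rule sv)
  define w where "w x = u t x - v t x" for x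
  define Dw where "Dw x h = Du t x h - Dv t x h" for x h
  \<comment> \<open>\<open>F\<close> is the energy flux of \<open>w\<close>; by \<open>inner_euler_difference\<close>, \<open>w \<bullet> (ut - vt)\<close>
    differs from \<open>- w \<bullet> Dv w\<close> by the divergence of \<open>F\<close>.\<close>
  define F where "F x = ((norm (w x))\<^sup>2 / 2) *\<^sub>R u t x + (p t x - q t x) *\<^sub>R w x" for x
  define DF where "DF x h = (w x \<bullet> Dw x h) *\<^sub>R u t x + ((norm (w x))\<^sup>2 / 2) *\<^sub>R Du t x h
    + ((gp t x - gq t x) \<bullet> h) *\<^sub>R w x + (p t x - q t x) *\<^sub>R Dw x h" for x h
  note cont = U.continuous_on_u V.continuous_on_u U.continuous_on_Du V.continuous_on_Du
    U.continuous_on_p V.continuous_on_p U.continuous_on_gp V.continuous_on_gp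
  have "(F has_derivative DF x) (at x)" for x
  proof -
    have "(w has_derivative Dw x) (at x)"
      unfolding w_def Dw_def using t by (intro has_derivative_diff U.space_derivative V.space_derivative)
    then have "(F has_derivative (\<lambda>h. ((w x \<bullet> Dw x h + Dw x h \<bullet> w x) / 2) *\<^sub>R u t x
        + ((norm (w x))\<^sup>2 / 2) *\<^sub>R Du t x h
        + ((gp t x \<bullet> h - gq t x \<bullet> h) *\<^sub>R w x + (p t x - q t x) *\<^sub>R Dw x h))) (at x)"
      unfolding F_def power2_norm_eq_inner
      using U.space_derivative[OF t] U.pressure_gradient[OF t] V.pressure_gradient[OF t]
      by (auto intro!: derivative_eq_intros)
    then show ?thesis
      by (rule has_derivative_eq_rhs) (simp add: DF_def fun_eq_iff inner_commute[of "Dw x _" "w x"] algebra_simps)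
  qed
  moreover have "periodic_field F"
    using U.periodic_u V.periodic_u U.periodic_p V.periodic_p t
    by (simp add: periodic_field_def F_def w_def)
  moreover have "continuous_on UNIV (\<lambda>x. DF x h)" for h
    unfolding DF_def Dw_def w_def using t by (intro continuous_intros cont) simp_all
  ultimately have div: "integral torus_box (\<lambda>x. trace (matrix (DF x))) = 0"
    by (intro integral_torus_box_divergence_eq_0)
  have "w x \<bullet> (ut t x - vt t x) = - trace (matrix (DF x)) - w x \<bullet> Dv t x (w x)" for x
    unfolding DF_def Dw_def w_def using t
    by (intro inner_euler_difference bounded_linear.linear[OF blinfun.bounded_linear_right] U.divergence_free V.divergence_free
        U.momentum_equation V.momentum_equation)
  moreover have "(\<lambda>x. trace (matrix (DF x))) integrable_on torus_box"
    unfolding trace_matrix DF_def Dw_def w_def using t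
    by (intro integrable_on_torus_box continuous_intros cont) simp_all
  moreover have "(\<lambda>x. w x \<bullet> Dv t x (w x)) integrable_on torus_box"
    unfolding w_def using t by (intro integrable_on_torus_box continuous_intros cont)
  ultimately show ?thesis
    using div by (simp add: w_def integral_diff integral_neg integrable_neg)
qed

lemma energy_difference_has_derivative:
  assumes su: "euler_flow u ut Du p gp" and sv: "euler_flow v vt Dv q gq" and t: "t \<ge> 0"
  shows "((\<lambda>s. integral torus_box (\<lambda>x. (norm (u s x - v s x))\<^sup>2)) has_real_derivative
    - 2 * integral torus_box (\<lambda>x. (u t x - v t x) \<bullet> Dv t x (u t x - v t x))) (at t within {0..})"
proof -
  interpret U: euler_flow u ut Du p gp by (rule su)
  interpret V: euler_flow v vt Dv q gq by (rule sv)
  have "((\<lambda>s. integral torus_box (\<lambda>x. (norm (u s x - v s x))\<^sup>2)) has_real_derivative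
      integral torus_box (\<lambda>x. 2 * ((u t x - v t x) \<bullet> (ut t x - vt t x)))) (at t within {0..})"
    unfolding torus_box_def
  proof (rule leibniz_rule_field_derivative)
    fix s :: real and x assume "s \<in> {0..}"
    then have "((\<lambda>s. u s x - v s x) has_vector_derivative ut s x - vt s x) (at s within {0..})"
      by (intro has_vector_derivative_diff U.time_derivative V.time_derivative) auto
    then have d: "((\<lambda>s. u s x - v s x) has_derivative (\<lambda>h. h *\<^sub>R (ut s x - vt s x))) (at s within {0..})"
      by (simp add: has_vector_derivative_def)
    show "((\<lambda>s. (norm (u s x - v s x))\<^sup>2) has_real_derivative 2 * ((u s x - v s x) \<bullet> (ut s x - vt s x)))
        (at s within {0..})"
      unfolding power2_norm_eq_inner has_field_derivative_def
      using has_derivative_inner[OF d d]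
      by (rule has_derivative_eq_rhs) (simp add: fun_eq_iff inner_commute[of "ut s x - vt s x" "u s x - v s x"])
  next
    fix s :: real assume "s \<in> {0..}"
    then show "(\<lambda>x. (norm (u s x - v s x))\<^sup>2) integrable_on cbox 0 (\<chi> i. 2 * pi)"
      unfolding torus_box_def[symmetric]
      by (intro integrable_on_torus_box continuous_intros U.continuous_on_u V.continuous_on_u) simp_all
  next
    show "continuous_on ({0..} \<times> cbox 0 (\<chi> i. 2 * pi)) (\<lambda>(s, x). 2 * ((u s x - v s x) \<bullet> (ut s x - vt s x)))"
      using U.continuous_u U.continuous_ut V.continuous_u V.continuous_ut
      unfolding split_beta' by (auto intro!: continuous_intros intro: continuous_on_subset)
  qed (use t in auto)
  then show ?thesis
    using integral_inner_euler_difference[OF su sv t] by simp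
qed

lemma (in euler_flow) H_norm_conserved:
  assumes "t \<ge> 0"
  shows "H_norm (u t) = H_norm (u 0)"
proof -
  define E where "E = (\<lambda>s. integral torus_box (\<lambda>x. (norm (u s x))\<^sup>2))"
  have "(E has_derivative (\<lambda>_. 0)) (at s within {0..})" if "s \<in> {0..}" for s
    using energy_difference_has_derivative[OF euler_flow_axioms euler_flow_zero, of s] that
    by (auto simp: E_def has_field_derivative_def zero_blinfun.rep_eq elim!: has_derivative_eq_rhs)
  then obtain c where "\<forall>s\<in>{0..}. E s = c"
    using has_derivative_zero_constant[of "{0..}" E] by (auto simp: convex_real_interval)
  then have "E t = E 0"
    using assms by auto
  then show ?thesis
    by (simp add: E_def H_norm_def)
qed

lemma gronwall_exp_bound:
  fixes W W' :: "real \<Rightarrow> real"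
  assumes "0 \<le> T" and "continuous_on {0..T} W"
    and "\<And>s. 0 < s \<Longrightarrow> s < T \<Longrightarrow> (W has_real_derivative W' s) (at s)"
    and "\<And>s. 0 < s \<Longrightarrow> s < T \<Longrightarrow> W' s \<le> c * W s"
  shows "W T \<le> W 0 * exp (c * T)"
proof -
  define F where "F s = exp (- c * s) * W s" for s
  have "F T \<le> F 0"
  proof (rule DERIV_nonpos_imp_decreasing_open[OF assms(1)])
    fix s assume s: "0 < s" "s < T"
    have "(F has_real_derivative exp (- c * s) * (W' s - c * W s)) (at s)"
      unfolding F_def by (rule derivative_eq_intros assms(3)[OF s] refl | simp add: algebra_simps)+
    moreover have "exp (- c * s) * (W' s - c * W s) \<le> 0"
      using assms(4)[OF s] by (simp add: mult_nonneg_nonpos)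
    ultimately show "\<exists>y. (F has_real_derivative y) (at s) \<and> y \<le> 0"
      by blast
  next
    show "continuous_on {0..T} F"
      unfolding F_def by (intro continuous_intros assms(2))
  qed
  then show ?thesis
    by (simp add: F_def exp_minus field_simps)
qed

lemma integral_torus_box_inner_blinfun_le:
  fixes w :: "real^2 \<Rightarrow> real^2" and A :: "real^2 \<Rightarrow> (real^2) \<Rightarrow>\<^sub>L (real^2)"
  assumes w: "continuous_on UNIV w" and A: "continuous_on UNIV A"
    and bound: "\<And>x. x \<in> torus_box \<Longrightarrow> norm (A x) \<le> C"
  shows "- integral torus_box (\<lambda>x. w x \<bullet> A x (w x)) \<le> C * integral torus_box (\<lambda>x. (norm (w x))\<^sup>2)"
proof -
  have "integral torus_box (\<lambda>x. - (w x \<bullet> A x (w x))) \<le> integral torus_box (\<lambda>x. C * (norm (w x))\<^sup>2)"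
  proof (rule integral_le)
    fix x assume "x \<in> torus_box"
    have "- (w x \<bullet> A x (w x)) \<le> norm (w x) * norm (A x (w x))"
      using Cauchy_Schwarz_ineq2[of "w x" "A x (w x)"] by linarith
    also have "\<dots> \<le> norm (w x) * (norm (A x) * norm (w x))"
      by (intro mult_left_mono norm_blinfun) simp
    also have "\<dots> \<le> norm (w x) * (C * norm (w x))"
      using bound[OF \<open>x \<in> torus_box\<close>] by (intro mult_left_mono mult_right_mono) simp_all
    finally show "- (w x \<bullet> A x (w x)) \<le> C * (norm (w x))\<^sup>2"
      by (simp add: power2_eq_square algebra_simps)
  qed (intro integrable_on_torus_box continuous_intros w A)+
  moreover have "(\<lambda>x. w x \<bullet> A x (w x)) integrable_on torus_box"
    by (intro integrable_on_torus_box continuous_intros w A)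
  ultimately show ?thesis
    by (simp add: integral_neg)
qed

lemma euler_flow_difference_stability:
  assumes su: "euler_flow u ut Du p gp" and sv: "euler_flow v vt Dv q gq" and T: "T \<ge> 0"
  obtains C where "integral torus_box (\<lambda>x. (norm (u T x - v T x))\<^sup>2)
    \<le> integral torus_box (\<lambda>x. (norm (u 0 x - v 0 x))\<^sup>2) * exp (C * T)"
proof -
  interpret U: euler_flow u ut Du p gp by (rule su)
  interpret V: euler_flow v vt Dv q gq by (rule sv)
  define W where "W = (\<lambda>s. integral torus_box (\<lambda>x. (norm (u s x - v s x))\<^sup>2))"
  define W' where "W' = (\<lambda>s. - 2 * integral torus_box (\<lambda>x. (u s x - v s x) \<bullet> Dv s x (u s x - v s x)))"
  have deriv: "(W has_real_derivative W' s) (at s within {0..})" if "s \<ge> 0" for s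
    unfolding W_def W'_def by (rule energy_difference_has_derivative[OF su sv that])
  have "compact ((\<lambda>(s, x). Dv s x) ` ({0..T} \<times> torus_box))"
    unfolding torus_box_def
    by (intro compact_continuous_image continuous_on_subset[OF V.continuous_Du] compact_Times) auto
  then have "bounded ((\<lambda>(s, x). Dv s x) ` ({0..T} \<times> torus_box))"
    by (rule compact_imp_bounded)
  then obtain C where C: "\<And>s x. s \<in> {0..T} \<Longrightarrow> x \<in> torus_box \<Longrightarrow> norm (Dv s x) \<le> C"
    unfolding bounded_iff by force
  have "W T \<le> W 0 * exp (2 * C * T)"
  proof (rule gronwall_exp_bound[OF T])
    have "continuous_on {0..} W"
      using DERIV_continuous[OF deriv] by (simp add: continuous_on_eq_continuous_within)
    then show "continuous_on {0..T} W"
      by (rule continuous_on_subset) auto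
  next
    fix s assume s: "0 < s" "s < T"
    then have "at s within {0..} = at s"
      by (intro at_within_interior) simp
    then show "(W has_real_derivative W' s) (at s)"
      using deriv[of s] s by simp
    have "- integral torus_box (\<lambda>x. (u s x - v s x) \<bullet> Dv s x (u s x - v s x))
        \<le> C * integral torus_box (\<lambda>x. (norm (u s x - v s x))\<^sup>2)"
      using s C[of s]
      by (intro integral_torus_box_inner_blinfun_le continuous_intros U.continuous_on_u V.continuous_on_u
          V.continuous_on_Du) simp_all
    then show "W' s \<le> 2 * C * W s"
      by (simp add: W_def W'_def)
  qed
  then show ?thesis
    by (intro that[of "2 * C"]) (simp add: W_def)
qed

lemma euler_flow_unique:
  assumes su: "euler_flow u ut Du p gp" and sv: "euler_flow v vt Dv q gq"
    and init: "\<And>x. u 0 x = v 0 x" and T: "T \<ge> 0"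
  shows "u T = v T"
proof -
  interpret U: euler_flow u ut Du p gp by (rule su)
  interpret V: euler_flow v vt Dv q gq by (rule sv)
  obtain C where "integral torus_box (\<lambda>x. (norm (u T x - v T x))\<^sup>2)
      \<le> integral torus_box (\<lambda>x. (norm (u 0 x - v 0 x))\<^sup>2) * exp (C * T)"
    using euler_flow_difference_stability[OF su sv T] .
  moreover have "0 \<le> integral torus_box (\<lambda>x. (norm (u T x - v T x))\<^sup>2)"
    using T by (intro integral_nonneg integrable_on_torus_box continuous_intros U.continuous_on_u
        V.continuous_on_u) simp_all
  ultimately have "H_norm (\<lambda>x. u T x - v T x) = 0"
    by (simp add: H_norm_def init)
  moreover have "continuous_on UNIV (\<lambda>x. u T x - v T x)"
    using T by (intro continuous_intros U.continuous_on_u V.continuous_on_u)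
  moreover have "periodic_field (\<lambda>x. u T x - v T x)"
    using T U.periodic_u V.periodic_u by (simp add: periodic_field_def)
  ultimately show ?thesis
    using H_norm_eq_0_imp_eq_0 by fastforce
qed

lemma (in euler_flow) translation_invariant:
  assumes "\<And>x. u 0 (x + a) = u 0 x" and "t \<ge> 0"
  shows "u t (x + a) = u t x"
  using euler_flow_unique[OF translate euler_flow_axioms assms] by (simp add: fun_eq_iff)

lemma euler_flows_P_proj_diff_eq_0:
  fixes k :: int
  assumes U1: "euler_flow u1 ut1 Du1 p1 gp1" and U2: "euler_flow u2 ut2 Du2 p2 gp2"
    and inv1: "\<forall>x i. u1 0 (x + (2 * pi / of_int k) *\<^sub>R axis i 1) = u1 0 x"
    and inv2: "\<forall>x i. u2 0 (x + (2 * pi / of_int k) *\<^sub>R axis i 1) = u2 0 x"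
    and M: "M < of_int \<bar>k\<bar>" and t: "t \<ge> 0"
  shows "P_proj M (\<lambda>x. u1 t x - u2 t x) = (\<lambda>x. 0)"
proof (intro P_proj_eq_0 fourier_coeff_low_modes_eq_0[OF _ _ _ _ M])
  show "continuous_on UNIV (\<lambda>x. u1 t x - u2 t x)"
    using t by (intro continuous_intros euler_flow.continuous_on_u[OF U1] euler_flow.continuous_on_u[OF U2])
  show "periodic_field (\<lambda>x. u1 t x - u2 t x)"
    using euler_flow.periodic_u[OF U1 t] euler_flow.periodic_u[OF U2 t]
    by (simp add: periodic_field_def)
  show "u1 t (x + (2 * pi / of_int k) *\<^sub>R axis i 1) - u2 t (x + (2 * pi / of_int k) *\<^sub>R axis i 1)
      = u1 t x - u2 t x" for x i
    using euler_flow.translation_invariant[OF U1, where a = "(2 * pi / of_int k) *\<^sub>R axis i 1", OF inv1[rule_format] t]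
      euler_flow.translation_invariant[OF U2, where a = "(2 * pi / of_int k) *\<^sub>R axis i 1", OF inv2[rule_format] t]
    by simp
qed

lemma euler_flows_H_norm_diff_ge:
  assumes U1: "euler_flow u1 ut1 Du1 p1 gp1" and U2: "euler_flow u2 ut2 Du2 p2 gp2" and t: "t \<ge> 0"
  shows "\<bar>H_norm (u1 0) - H_norm (u2 0)\<bar> \<le> H_norm (\<lambda>x. u1 t x - u2 t x)"
proof -
  have "\<bar>H_norm (u1 0) - H_norm (u2 0)\<bar> = \<bar>H_norm (u1 t) - H_norm (u2 t)\<bar>"
    using euler_flow.H_norm_conserved[OF U1 t] euler_flow.H_norm_conserved[OF U2 t] by simp
  also have "\<dots> \<le> H_norm (\<lambda>x. u1 t x - u2 t x)"
    using t by (intro H_norm_diff_ge euler_flow.continuous_on_u[OF U1] euler_flow.continuous_on_u[OF U2])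
  finally show ?thesis .
qed

theorem proposition4p3:
  fixes k :: int and uin1 uin2 :: "real^2 \<Rightarrow> real^2"
    and u1 u2 :: "real \<Rightarrow> real^2 \<Rightarrow> real^2"
  assumes "k \<noteq> 0"
    and "uin1 \<in> V3" and "uin2 \<in> V3"
    and "\<forall>x (i::2). uin1 (x + (2 * pi / real_of_int k) *\<^sub>R axis i 1) = uin1 x"
    and "\<forall>x (i::2). uin2 (x + (2 * pi / real_of_int k) *\<^sub>R axis i 1) = uin2 x"
    and "H_norm uin1 \<noteq> H_norm uin2"
    and "euler_solution u1 uin1" and "euler_solution u2 uin2"
  shows "(\<forall>M::real. M < real_of_int \<bar>k\<bar> \<longrightarrow>
            (\<forall>t\<ge>0. P_proj M (\<lambda>x. u1 t x - u2 t x) = (\<lambda>x. 0))) \<and>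
         Limsup at_top (\<lambda>t::real. ereal (H_norm (\<lambda>x. u1 t x - u2 t x))) > 0"
proof -
  obtain ut1 Du1 p1 gp1 where U1: "euler_flow u1 ut1 Du1 p1 gp1"
    using euler_solution_imp_euler_flow[OF assms(7)] .
  obtain ut2 Du2 p2 gp2 where U2: "euler_flow u2 ut2 Du2 p2 gp2"
    using euler_solution_imp_euler_flow[OF assms(8)] .
  have init: "u1 0 = uin1" "u2 0 = uin2"
    using assms(7,8) by (auto simp: euler_solution_def)
  have low_modes: "P_proj M (\<lambda>x. u1 t x - u2 t x) = (\<lambda>x. 0)" if "M < of_int \<bar>k\<bar>" "t \<ge> 0" for M t
    using assms(4,5) unfolding init[symmetric] by (rule euler_flows_P_proj_diff_eq_0[OF U1 U2 _ _ that])
  have "0 < ereal \<bar>H_norm uin1 - H_norm uin2\<bar>"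
    using assms(6) by simp
  also have "\<dots> \<le> Limsup at_top (\<lambda>t. ereal (H_norm (\<lambda>x. u1 t x - u2 t x)))"
    using euler_flows_H_norm_diff_ge[OF U1 U2] unfolding init
    by (intro le_Limsup eventually_mono[OF eventually_ge_at_top[of 0]]) auto
  finally show ?thesis
    using low_modes by blast
qed

end
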